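(* Let $m\geq 2$ be an integer and let $H$ be $\mathrm{Sym}(m)$ or $\mathrm{Alt}(m)$ acting on the set of $2$-element subsets of $\{1,\ldots,m\}$. If $H$ contains a permutation $g$ having at most four cycles in this action, then $m\leq 9$.
   Context: The number of cycles of a permutation is the number of orbits of the cyclic group it generates, fixed points included. *)

theory Defs
  imports "HOL-Combinatorics.Combinatorics"
begin

definition two_subsets :: "nat \<Rightarrow> nat set set" where
  "two_subsets m = {S. S \<subseteq> {1..m} \<and> card S = 2}"

text \<open>Number of cycles of the permutation induced by g on the 2-subsets of {1..m}:
  the number of orbits of the cyclic group generated by the induced map S \<mapsto> g ` S
  (fixed points included).\<close>
definition pair_cycles :: "nat \<Rightarrow> (nat \<Rightarrow> nat) \<Rightarrow> nat" where
  "pair_cycles m g = card ((\<lambda>S. orbit (\<lambda>T. g ` T) S) ` two_subsets m)"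

end

theory Submission
  imports Defs
begin

text \<open>Attach to each 2-subset S the set of g-cycles it meets and its gap: the least n > 0
  such that g^n maps one element of S to the other. Both are constant on the orbit of S
  under S \<mapsto> g ` S. Inside a cycle of length L the pair {a, g^d a} has gap d for every
  0 < d \<le> L div 2, and pairs meeting two different cycles are told apart by those cycles.
  Hence g with r cycles of lengths L_1, ..., L_r has at least \<Sum> (L_i div 2) + (r choose 2)
  orbits on 2-subsets, while m = \<Sum> L_i \<le> 2 \<Sum> (L_i div 2) + r. At most four orbits
  then forces m \<le> 9.\<close>

definition cycle_gap :: "('a \<Rightarrow> 'a) \<Rightarrow> 'a set \<Rightarrow> nat" where
  "cycle_gap g S = (LEAST n. 0 < n \<and> (\<exists>a\<in>S. (g ^^ n) a \<in> S - {a}))"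

definition pair_signature :: "('a \<Rightarrow> 'a) \<Rightarrow> 'a set \<Rightarrow> 'a set set \<times> nat" where
  "pair_signature g S = (orbit g ` S, cycle_gap g S)"

lemma card_invariant_image_le_card_orbits:
  assumes inv: "\<And>x. f (F x) = f x" and "finite A"
  shows "card (f ` A) \<le> card ((\<lambda>x. orbit F x) ` A)"
proof -
  have const: "f y = f x" if "y \<in> orbit F x" for x y
    using that by induction (simp_all add: inv)
  define pick where "pick Orb = f (SOME y. y \<in> Orb)" for Orb
  have "pick (orbit F x) = f x" for x
    unfolding pick_def by (rule const, rule someI, rule orbit.base)
  then have "f ` A = pick ` (\<lambda>x. orbit F x) ` A"
    by (simp add: image_image)
  then show ?thesis
    using \<open>finite A\<close> by (simp add: card_image_le)
qed

lemma permutation_orbit_eq: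
  assumes "permutation g" and "b \<in> orbit g a"
  shows "orbit g b = orbit g a"
proof
  show "orbit g b \<subseteq> orbit g a"
    using assms(2) orbit_trans by fast
  have "a \<in> orbit g b"
    using orbit_swap[OF permutation_self_in_orbit[OF assms(1)] assms(2)] .
  then show "orbit g a \<subseteq> orbit g b"
    using orbit_trans by fast
qed

lemma card_orbit_eq_funpow_dist1:
  assumes "permutation g"
  shows "card (orbit g a) = funpow_dist1 g a a"
proof -
  have "a \<in> orbit g a"
    using permutation_self_in_orbit[OF assms] .
  then show ?thesis
    unfolding orbit_conv_funpow_dist1[OF \<open>a \<in> orbit g a\<close>]
    by (simp add: card_image inj_on_funpow_dist1[OF \<open>a \<in> orbit g a\<close>])
qed

lemma pair_signature_image:
  assumes "permutation g"
  shows "pair_signature g (g ` S) = pair_signature g S"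
proof -
  have "inj g"
    using permutation_bijective[OF assms] by (simp add: bij_is_inj)
  have orbits: "orbit g ` g ` S = orbit g ` S"
    using permutation_orbit_step[OF assms] by (auto simp: image_image)
  have "(\<exists>a\<in>g ` S. (g ^^ n) a \<in> g ` S - {a}) \<longleftrightarrow> (\<exists>a\<in>S. (g ^^ n) a \<in> S - {a})" for n
  proof -
    have "(g ^^ n) (g a) = g ((g ^^ n) a)" for a
      by (simp add: funpow_swap1)
    moreover have "g x \<in> g ` S - {g a} \<longleftrightarrow> x \<in> S - {a}" for x a
      using \<open>inj g\<close> by (auto simp: inj_eq inj_image_mem_iff)
    ultimately show ?thesis by auto
  qed
  with orbits show ?thesis
    by (simp add: pair_signature_def cycle_gap_def)
qed

lemma finite_two_subsets: "finite (two_subsets m)"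
  by (rule finite_subset[of _ "Pow {1..m}"]) (auto simp: two_subsets_def)

lemma card_pair_signatures_le_pair_cycles:
  assumes "permutation g"
  shows "card (pair_signature g ` two_subsets m) \<le> pair_cycles m g"
  unfolding pair_cycles_def
  using card_invariant_image_le_card_orbits[of "pair_signature g" "\<lambda>T. g ` T",
      OF pair_signature_image[OF assms] finite_two_subsets] .

lemma cycle_gap_funpow:
  assumes "permutation g" and "0 < d" "2 * d \<le> funpow_dist1 g a a"
  shows "(g ^^ d) a \<noteq> a" and "cycle_gap g {a, (g ^^ d) a} = d"
proof -
  have self: "a \<in> orbit g a"
    using permutation_self_in_orbit[OF assms(1)] .
  show ne: "(g ^^ d) a \<noteq> a"
    using funpow_dist1_least[of d g a a] assms(2,3) by simp
  let ?b = "(g ^^ d) a"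
  show "cycle_gap g {a, ?b} = d"
    unfolding cycle_gap_def
  proof (rule Least_equality)
    show "0 < d \<and> (\<exists>x\<in>{a, ?b}. (g ^^ d) x \<in> {a, ?b} - {x})"
      using assms(2) ne by auto
  next
    fix n assume n: "0 < n \<and> (\<exists>x\<in>{a, ?b}. (g ^^ n) x \<in> {a, ?b} - {x})"
    show "d \<le> n"
    proof (rule ccontr)
      assume "\<not> d \<le> n"
      from n obtain x where x: "x \<in> {a, ?b}" "(g ^^ n) x \<in> {a, ?b} - {x}"
        by blast
      show False
      proof (cases "x = a")
        case True
        then have "(g ^^ n) a = (g ^^ d) a"
          using x by auto
        moreover have "(g ^^ n) a \<noteq> (g ^^ d) a"
          using funpow_neq_less_funpow_dist1[OF self, of n d] \<open>\<not> d \<le> n\<close> assms(3) by simp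
        ultimately show False by simp
      next
        case False
        then have "(g ^^ n) ?b = a"
          using x by auto
        then have "(g ^^ (n + d)) a = a"
          by (simp add: funpow_add)
        moreover have "(g ^^ (n + d)) a \<noteq> a"
          using funpow_dist1_least[of "n + d" g a a] \<open>\<not> d \<le> n\<close> assms(3) n by simp
        ultimately show False by simp
      qed
    qed
  qed
qed

lemma card_div_2_le_signatures_within_orbit:
  assumes "g permutes A" "finite A" "a \<in> A"
  shows "card (orbit g a) div 2
           \<le> card {v \<in> pair_signature g ` {S. S \<subseteq> A \<and> card S = 2}. fst v = {orbit g a}}"
    (is "_ \<le> card ?Fib")
proof -
  have perm: "permutation g"
    using assms(1,2) by (auto simp: permutation_permutes)
  let ?D = "{1..card (orbit g a) div 2}"
  let ?sig = "\<lambda>d. pair_signature g {a, (g ^^ d) a}"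
  have gap: "(g ^^ d) a \<noteq> a" "cycle_gap g {a, (g ^^ d) a} = d" if "d \<in> ?D" for d
  proof -
    have "0 < d" "2 * d \<le> funpow_dist1 g a a"
      using that card_orbit_eq_funpow_dist1[OF perm, of a] by auto
    then show "(g ^^ d) a \<noteq> a" "cycle_gap g {a, (g ^^ d) a} = d"
      using cycle_gap_funpow[OF perm] by blast+
  qed
  have sub: "?sig ` ?D \<subseteq> ?Fib"
  proof
    fix v assume "v \<in> ?sig ` ?D"
    then obtain d where d: "d \<in> ?D" "v = ?sig d"
      by blast
    have "(g ^^ d) a \<in> orbit g a"
      by (rule funpow_in_orbit[OF permutation_self_in_orbit[OF perm]])
    moreover have "orbit g a \<subseteq> A"
      using permutes_orbit_subset[OF assms(1,3)] .
    ultimately have "{a, (g ^^ d) a} \<in> {S. S \<subseteq> A \<and> card S = 2}"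
      using assms(3) gap(1)[OF d(1)] by auto
    moreover have "fst (?sig d) = {orbit g a}"
      using permutation_orbit_eq[OF perm \<open>(g ^^ d) a \<in> orbit g a\<close>]
      by (simp add: pair_signature_def)
    ultimately show "v \<in> ?Fib"
      using d(2) by blast
  qed
  have inj: "inj_on ?sig ?D"
  proof (rule inj_onI)
    fix d e assume "d \<in> ?D" "e \<in> ?D" "?sig d = ?sig e"
    then show "d = e"
      using gap(2) by (metis pair_signature_def snd_conv)
  qed
  have "finite ?Fib"
    using assms(2) by simp
  then have "card (?sig ` ?D) \<le> card ?Fib"
    using sub by (rule card_mono)
  then show ?thesis
    using card_image[OF inj] by simp
qed

lemma signatures_across_orbits_nonempty:
  assumes "Q \<subseteq> orbit g ` A" "card Q = 2"
  shows "{v \<in> pair_signature g ` {S. S \<subseteq> A \<and> card S = 2}. fst v = Q} \<noteq> {}"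
proof -
  obtain K L where Q: "Q = {K, L}" "K \<noteq> L"
    using card_2_iff[THEN iffD1, OF assms(2)] by blast
  then obtain a b where ab: "a \<in> A" "b \<in> A" "K = orbit g a" "L = orbit g b"
    using assms(1) by (meson imageE insert_subset)
  then have "a \<noteq> b"
    using Q(2) by blast
  with ab have "{a, b} \<in> {S. S \<subseteq> A \<and> card S = 2}"
    by simp
  moreover have "fst (pair_signature g {a, b}) = Q"
    using Q ab by (simp add: pair_signature_def)
  ultimately show ?thesis
    by (metis (mono_tags, lifting) empty_iff image_eqI mem_Collect_eq)
qed

lemma sum_card_fibers_le:
  assumes "finite Y" "finite F"
  shows "(\<Sum>X\<in>F. card {v \<in> Y. h v = X}) \<le> card Y"
proof -
  have "(\<Sum>X\<in>F. card {v \<in> Y. h v = X}) = card (\<Union>X\<in>F. {v \<in> Y. h v = X})"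
    using assms by (intro card_UN_disjoint[symmetric]) auto
  also have "\<dots> \<le> card Y"
    using assms(1) by (intro card_mono) auto
  finally show ?thesis .
qed

lemma half_orbits_plus_orbit_pairs_le_card_signatures:
  assumes "g permutes A" "finite A"
  shows "(\<Sum>K\<in>orbit g ` A. card K div 2) + (card (orbit g ` A) choose 2)
           \<le> card (pair_signature g ` {S. S \<subseteq> A \<and> card S = 2})"
proof -
  let ?C = "orbit g ` A"
  let ?Y = "pair_signature g ` {S. S \<subseteq> A \<and> card S = 2}"
  let ?fib = "\<lambda>X. card {v \<in> ?Y. fst v = X}"
  let ?F1 = "(\<lambda>K. {K}) ` ?C" and ?F2 = "{Q. Q \<subseteq> ?C \<and> card Q = 2}"
  have finY: "finite ?Y"
    using assms(2) by (auto intro: finite_imageI finite_subset[of _ "Pow A"])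
  have finF2: "finite ?F2"
    using assms(2) by (auto intro: finite_subset[of _ "Pow ?C"])
  have "(\<Sum>K\<in>?C. card K div 2) \<le> (\<Sum>K\<in>?C. ?fib {K})"
    using card_div_2_le_signatures_within_orbit[OF assms] by (intro sum_mono) auto
  also have "\<dots> = (\<Sum>X\<in>?F1. ?fib X)"
    by (simp add: sum.reindex)
  finally have within: "(\<Sum>K\<in>?C. card K div 2) \<le> (\<Sum>X\<in>?F1. ?fib X)" .
  have "card ?C choose 2 = (\<Sum>Q\<in>?F2. 1)"
    using n_subsets[of ?C 2] assms(2) by simp
  also have "\<dots> \<le> (\<Sum>Q\<in>?F2. ?fib Q)"
    using signatures_across_orbits_nonempty[of _ g A] finY
    by (intro sum_mono) (auto simp: Suc_le_eq card_gt_0_iff)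
  finally have across: "card ?C choose 2 \<le> (\<Sum>Q\<in>?F2. ?fib Q)" .
  have "(\<Sum>X\<in>?F1. ?fib X) + (\<Sum>Q\<in>?F2. ?fib Q) = (\<Sum>X\<in>?F1 \<union> ?F2. ?fib X)"
    using assms(2) finF2 by (intro sum.union_disjoint[symmetric]) auto
  also have "\<dots> \<le> card ?Y"
    using assms(2) finF2 finY by (intro sum_card_fibers_le) auto
  finally show ?thesis
    using within across by linarith
qed

lemma card_le_twice_half_orbits_plus_card_orbits:
  assumes "g permutes A" "finite A"
  shows "card A \<le> 2 * (\<Sum>K\<in>orbit g ` A. card K div 2) + card (orbit g ` A)"
proof -
  have perm: "permutation g"
    using assms by (auto simp: permutation_permutes)
  have union: "\<Union>(orbit g ` A) = A"
    using permutes_orbit_subset[OF assms(1)] permutation_self_in_orbit[OF perm] by blast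
  have "pairwise disjnt (orbit g ` A)"
    by (auto simp: pairwise_def disjnt_def dest: permutation_orbit_eq[OF perm])
  moreover have "finite K" if "K \<in> orbit g ` A" for K
    using that permutes_orbit_subset[OF assms(1)] finite_subset[OF _ assms(2)] by blast
  ultimately have "card (\<Union>(orbit g ` A)) = (\<Sum>K\<in>orbit g ` A. card K)"
    by (rule card_Union_disjoint)
  then have "card A = (\<Sum>K\<in>orbit g ` A. card K)"
    by (simp only: union)
  also have "\<dots> \<le> (\<Sum>K\<in>orbit g ` A. 2 * (card K div 2) + 1)"
    by (rule sum_mono) simp
  also have "\<dots> = 2 * (\<Sum>K\<in>orbit g ` A. card K div 2) + card (orbit g ` A)"
    unfolding sum.distrib by (simp add: sum_distrib_left)
  finally show ?thesis .
qed

lemma twice_plus_le_9_of_plus_choose_2_le_4: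
  fixes s r :: nat
  assumes "s + (r choose 2) \<le> 4"
  shows "2 * s + r \<le> 9"
proof (cases "r \<ge> 4")
  case True
  then have "4 choose 2 \<le> r choose 2"
    by (rule binomial_right_mono)
  then show ?thesis
    using assms by (simp add: numeral_eq_Suc)
next
  case False
  then have "r = 0 \<or> r = 1 \<or> r = 2 \<or> r = 3"
    by auto
  then show ?thesis
    using assms by (auto simp: numeral_eq_Suc)
qed

theorem lemma3p3:
  fixes m :: nat and H :: "(nat \<Rightarrow> nat) set" and g :: "nat \<Rightarrow> nat"
  assumes "m \<ge> 2"
    and "H = {p. p permutes {1..m}} \<or> H = {p. p permutes {1..m} \<and> evenperm p}"
    and "g \<in> H"
    and "pair_cycles m g \<le> 4"
  shows "m \<le> 9"
proof -
  have g: "g permutes {1..m}"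
    using assms(2,3) by auto
  let ?C = "orbit g ` {1..m}"
  let ?s = "\<Sum>K\<in>?C. card K div 2"
  have "?s + (card ?C choose 2) \<le> card (pair_signature g ` two_subsets m)"
    using half_orbits_plus_orbit_pairs_le_card_signatures[OF g] by (simp add: two_subsets_def)
  also have "\<dots> \<le> pair_cycles m g"
    using g by (meson card_pair_signatures_le_pair_cycles finite_atLeastAtMost permutation_permutes)
  also have "\<dots> \<le> 4"
    by (fact assms(4))
  finally have "2 * ?s + card ?C \<le> 9"
    by (rule twice_plus_le_9_of_plus_choose_2_le_4)
  moreover have "m \<le> 2 * ?s + card ?C"
    using card_le_twice_half_orbits_plus_card_orbits[OF g] by simp
  ultimately show ?thesis
    by linarith
qed

end
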